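(* The cut rule — from $\Delta' \vdash A$ and $\Delta(A) \vdash B$ infer $\Delta(\Delta') \vdash B$, for an arbitrary bunched context $\Delta(-)$ — is admissible in the cut-free fragment $\vdash_{\mathsf{cf}}$ of BI+$L$. That is, if $\Delta' \vdash_{\mathsf{cf}} A$ and $\Delta(A) \vdash_{\mathsf{cf}} B$ are derivable in BI+$L$ without cut, then $\Delta(\Delta') \vdash_{\mathsf{cf}} B$ is derivable in BI+$L$ without cut.
   Context: BI is the logic of bunched implications, with formulas built from atoms, $\top,\bot,\wedge,\vee,\to$ and the multiplicatives $\mathsf{emp}$, $\ast$ (separating conjunction), $-\!\ast$ (magic wand). Its sequent calculus operates on sequents $\Delta \vdash \varphi$ where $\Delta$ is a bunch: a tree whose binary nodes are labelled with "$,$" (multiplicative, corresponding to $\ast$) or "$;$" (additive, corresponding to $\wedge$) and whose leaves are formulas or the empty bunches $\varnothing_m$, $\varnothing_a$, taken modulo commutative monoid laws for $(",",\varnothing_m)$ and $(";",\varnothing_a)$. A bunched context $\Delta(-)$ is a bunch with a hole. The calculus has the axiom $a \vdash a$ for atoms, weakening and contraction for "$;$" inside arbitrary bunched contexts, the usual left/right rules for all connectives (left rules applying deep inside bunched contexts), and the cut rule. A bunched term is a bunch built from "$,$", "$;$" and variables $x_1,\dots,x_n$; it is linear if each variable occurs at most once; $T[\Delta_1,\dots,\Delta_n]$ denotes substitution of $\Delta_j$ for $x_j$. A simple structural rule is a tuple $(\{T_1,\dots,T_m\},T)$ with $T$ linear, representing the rule: from $\Pi(T_i[\vec\Delta]) \vdash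 \varphi$ for all $1\le i\le m$, infer $\Pi(T[\vec\Delta]) \vdash \varphi$, for any bunched context $\Pi$ and bunches $\vec\Delta$ (e.g. weakening for "$,$" is $(\{x_1\}, x_1 , x_2)$). Fix a finite collection $L$ of simple structural rules; BI+$L$ is the BI sequent calculus extended with the rules in $L$, and $\vdash_{\mathsf{cf}}$ denotes provability in BI+$L$ without the cut rule. *)

theory Defs
  imports Main
begin

datatype 'a fm =
    Atom 'a
  | Top
  | Bot
  | Conj "'a fm" "'a fm"
  | Disj "'a fm" "'a fm"
  | Imp "'a fm" "'a fm"
  | Emp
  | Star "'a fm" "'a fm"
  | Wand "'a fm" "'a fm"

datatype 'a bunch =
    Leaf "'a fm"
  | EmpM
  | EmpA
  | Comma "'a bunch" "'a bunch"
  | Semi "'a bunch" "'a bunch"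

inductive bequiv :: "'a bunch \<Rightarrow> 'a bunch \<Rightarrow> bool" where
  brefl: "bequiv G G"
| bsym: "bequiv G H \<Longrightarrow> bequiv H G"
| btrans: "bequiv G H \<Longrightarrow> bequiv H K \<Longrightarrow> bequiv G K"
| bcong_comma: "bequiv G G' \<Longrightarrow> bequiv H H' \<Longrightarrow> bequiv (Comma G H) (Comma G' H')"
| bcong_semi: "bequiv G G' \<Longrightarrow> bequiv H H' \<Longrightarrow> bequiv (Semi G H) (Semi G' H')"
| comma_comm: "bequiv (Comma G H) (Comma H G)"
| comma_assoc: "bequiv (Comma (Comma G H) K) (Comma G (Comma H K))"
| comma_unit: "bequiv (Comma G EmpM) G"
| semi_comm: "bequiv (Semi G H) (Semi H G)"
| semi_assoc: "bequiv (Semi (Semi G H) K) (Semi G (Semi H K))"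
| semi_unit: "bequiv (Semi G EmpA) G"

datatype 'a ctx =
    Hole
  | CommaL "'a ctx" "'a bunch"
  | CommaR "'a bunch" "'a ctx"
  | SemiL "'a ctx" "'a bunch"
  | SemiR "'a bunch" "'a ctx"

fun fill :: "'a ctx \<Rightarrow> 'a bunch \<Rightarrow> 'a bunch" where
  "fill Hole D = D"
| "fill (CommaL C G) D = Comma (fill C D) G"
| "fill (CommaR G C) D = Comma G (fill C D)"
| "fill (SemiL C G) D = Semi (fill C D) G"
| "fill (SemiR G C) D = Semi G (fill C D)"

datatype bterm =
    Var nat
  | TComma bterm bterm
  | TSemi bterm bterm

fun tvars :: "bterm \<Rightarrow> nat list" where
  "tvars (Var n) = [n]"
| "tvars (TComma s t) = tvars s @ tvars t"
| "tvars (TSemi s t) = tvars s @ tvars t"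

definition linear :: "bterm \<Rightarrow> bool" where
  "linear T \<longleftrightarrow> distinct (tvars T)"

fun tsubst :: "bterm \<Rightarrow> (nat \<Rightarrow> 'a bunch) \<Rightarrow> 'a bunch" where
  "tsubst (Var n) ds = ds n"
| "tsubst (TComma s t) ds = Comma (tsubst s ds) (tsubst t ds)"
| "tsubst (TSemi s t) ds = Semi (tsubst s ds) (tsubst t ds)"

type_synonym srule = "bterm set \<times> bterm"

definition simple_rule :: "srule \<Rightarrow> bool" where
  "simple_rule r \<longleftrightarrow> finite (fst r) \<and> linear (snd r)"

inductive cf :: "srule set \<Rightarrow> 'a bunch \<Rightarrow> 'a fm \<Rightarrow> bool" for L :: "srule set" where
  ax: "cf L (Leaf (Atom a)) (Atom a)"
| equiv: "bequiv G G' \<Longrightarrow> cf L G A \<Longrightarrow> cf L G' A"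
| weak: "cf L (fill D G) A \<Longrightarrow> cf L (fill D (Semi G G')) A"
| contr: "cf L (fill D (Semi G G)) A \<Longrightarrow> cf L (fill D G) A"
| topR: "cf L EmpA Top"
| topL: "cf L (fill D EmpA) A \<Longrightarrow> cf L (fill D (Leaf Top)) A"
| empR: "cf L EmpM Emp"
| empL: "cf L (fill D EmpM) A \<Longrightarrow> cf L (fill D (Leaf Emp)) A"
| botL: "cf L (fill D (Leaf Bot)) A"
| conjL: "cf L (fill D (Semi (Leaf A) (Leaf B))) C \<Longrightarrow> cf L (fill D (Leaf (Conj A B))) C"
| conjR: "cf L G A \<Longrightarrow> cf L G' B \<Longrightarrow> cf L (Semi G G') (Conj A B)"
| disjL: "cf L (fill D (Leaf A)) C \<Longrightarrow> cf L (fill D (Leaf B)) C \<Longrightarrow> cf L (fill D (Leaf (Disj A B))) C"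
| disjR1: "cf L G A \<Longrightarrow> cf L G (Disj A B)"
| disjR2: "cf L G B \<Longrightarrow> cf L G (Disj A B)"
| impL: "cf L G A \<Longrightarrow> cf L (fill D (Leaf B)) C \<Longrightarrow> cf L (fill D (Semi G (Leaf (Imp A B)))) C"
| impR: "cf L (Semi G (Leaf A)) B \<Longrightarrow> cf L G (Imp A B)"
| starL: "cf L (fill D (Comma (Leaf A) (Leaf B))) C \<Longrightarrow> cf L (fill D (Leaf (Star A B))) C"
| starR: "cf L G A \<Longrightarrow> cf L G' B \<Longrightarrow> cf L (Comma G G') (Star A B)"
| wandL: "cf L G A \<Longrightarrow> cf L (fill D (Leaf B)) C \<Longrightarrow> cf L (fill D (Comma G (Leaf (Wand A B)))) C"
| wandR: "cf L (Comma G (Leaf A)) B \<Longrightarrow> cf L G (Wand A B)"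
| struct: "(Ts, T) \<in> L \<Longrightarrow> (\<forall>T'\<in>Ts. cf L (fill P (tsubst T' ds)) C) \<Longrightarrow>
           cf L (fill P (tsubst T ds)) C"

end

theory Submission
  imports Defs
begin

(*
  Cut is proved admissible in the stronger form of a multicut: from G |- A and X |- W
  infer Y |- W, where Y replaces any selection of the leaves A of X by G. Contraction may
  duplicate the cut formula, so a single cut does not survive the induction. The multicut
  is proved by induction on the size of A. For fixed A, induction on the derivation of
  X |- W pushes the substitution through every rule; a simple structural rule commutes with
  it because its conclusion term T is linear, so a substituted instance of T is again an
  instance of T. The substantial case is an occurrence of A introduced by a left rule. There,
  induction on the derivation of G |- A commutes every rule acting inside the context, and a
  final right rule for A meets the premises of the left rule, which reduces the cut to
  multicuts on the immediate subformulas of A.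
*)

inductive psubst :: "'a fm \<Rightarrow> 'a bunch \<Rightarrow> 'a bunch \<Rightarrow> 'a bunch \<Rightarrow> bool" for A G where
  psubst_leaf: "psubst A G (Leaf A) G"
| psubst_refl: "psubst A G X X"
| psubst_Comma: "psubst A G X1 Y1 \<Longrightarrow> psubst A G X2 Y2 \<Longrightarrow> psubst A G (Comma X1 X2) (Comma Y1 Y2)"
| psubst_Semi: "psubst A G X1 Y1 \<Longrightarrow> psubst A G X2 Y2 \<Longrightarrow> psubst A G (Semi X1 X2) (Semi Y1 Y2)"

lemma psubst_LeafD: "psubst A G (Leaf F) Y \<Longrightarrow> Y = Leaf F \<or> (F = A \<and> Y = G)"
  by (cases rule: psubst.cases) auto

lemma psubst_EmpMD: "psubst A G EmpM Y \<Longrightarrow> Y = EmpM"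
  by (cases rule: psubst.cases) auto

lemma psubst_EmpAD: "psubst A G EmpA Y \<Longrightarrow> Y = EmpA"
  by (cases rule: psubst.cases) auto

lemma psubst_CommaE:
  assumes "psubst A G (Comma X1 X2) Y"
  obtains Y1 Y2 where "Y = Comma Y1 Y2" "psubst A G X1 Y1" "psubst A G X2 Y2"
  using assms by (cases rule: psubst.cases) (auto intro: psubst_refl)

lemma psubst_SemiE:
  assumes "psubst A G (Semi X1 X2) Y"
  obtains Y1 Y2 where "Y = Semi Y1 Y2" "psubst A G X1 Y1" "psubst A G X2 Y2"
  using assms by (cases rule: psubst.cases) (auto intro: psubst_refl)

lemma psubst_bequiv:
  "bequiv X X' \<Longrightarrow> (\<forall>Y. psubst A G X Y \<longrightarrow> (\<exists>Y'. psubst A G X' Y' \<and> bequiv Y Y')) \<and>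
                    (\<forall>Y'. psubst A G X' Y' \<longrightarrow> (\<exists>Y. psubst A G X Y \<and> bequiv Y Y'))"
proof (induction rule: bequiv.induct)
  case bsym
  then show ?case by (meson bequiv.bsym)
next
  case btrans
  then show ?case by (meson bequiv.btrans)
next
  case bcong_comma
  then show ?case by (auto elim!: psubst_CommaE) (meson bequiv.bcong_comma psubst_Comma)+
next
  case bcong_semi
  then show ?case by (auto elim!: psubst_SemiE) (meson bequiv.bcong_semi psubst_Semi)+
qed (auto elim!: psubst_CommaE psubst_SemiE dest!: psubst_EmpMD psubst_EmpAD intro: bequiv.intros psubst.intros)

lemma psubst_fill: "psubst A G U U' \<Longrightarrow> psubst A G (fill D U) (fill D U')"
  by (induction D) (auto intro: psubst.intros)

lemma psubst_fill_inv:
  "psubst A G (fill D Z) Y \<Longrightarrow> \<exists>D' Z'. Y = fill D' Z' \<and> psubst A G Z Z' \<and>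
     (\<forall>U U'. psubst A G U U' \<longrightarrow> psubst A G (fill D U) (fill D' U'))"
proof (induction D arbitrary: Y)
  case Hole
  then show ?case by (metis fill.simps(1))
next
  case (CommaL C b)
  then show ?case by (auto elim!: psubst_CommaE) (metis fill.simps(2) psubst_Comma)
next
  case (CommaR b C)
  then show ?case by (auto elim!: psubst_CommaE) (metis fill.simps(3) psubst_Comma)
next
  case (SemiL C b)
  then show ?case by (auto elim!: psubst_SemiE) (metis fill.simps(4) psubst_Semi)
next
  case (SemiR b C)
  then show ?case by (auto elim!: psubst_SemiE) (metis fill.simps(5) psubst_Semi)
qed

lemma tsubst_cong: "(\<And>j. j \<in> set (tvars T) \<Longrightarrow> f j = g j) \<Longrightarrow> tsubst T f = tsubst T g"
  by (induction T) auto

lemma psubst_tsubst: "(\<And>j. psubst A G (ds j) (ds' j)) \<Longrightarrow> psubst A G (tsubst T ds) (tsubst T ds')"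
  by (induction T) (auto intro: psubst.intros)

lemma tsubst_merge:
  assumes "set (tvars s) \<inter> set (tvars t) = {}" and "\<forall>j. R j (d1 j)" and "\<forall>j. R j (d2 j)"
  obtains d where "tsubst s d = tsubst s d1" "tsubst t d = tsubst t d2" "\<forall>j. R j (d j)"
proof
  let ?d = "\<lambda>j. if j \<in> set (tvars s) then d1 j else d2 j"
  show "tsubst s ?d = tsubst s d1" "tsubst t ?d = tsubst t d2"
    using assms(1) by (auto intro!: tsubst_cong)
  show "\<forall>j. R j (?d j)" using assms(2,3) by simp
qed

lemma psubst_tsubst_inv:
  assumes "linear T" and "psubst A G (tsubst T ds) Z"
  shows "\<exists>ds'. Z = tsubst T ds' \<and> (\<forall>j. psubst A G (ds j) (ds' j))"
  using assms unfolding linear_def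
proof (induction T arbitrary: Z)
  case (Var n)
  then show ?case by (intro exI[of _ "ds(n := Z)"]) (auto intro: psubst_refl)
next
  case (TComma s t)
  from TComma.prems(2) obtain Z1 Z2 where Z: "Z = Comma Z1 Z2"
    "psubst A G (tsubst s ds) Z1" "psubst A G (tsubst t ds) Z2" by (auto elim: psubst_CommaE)
  have "distinct (tvars s)" "distinct (tvars t)" and disj: "set (tvars s) \<inter> set (tvars t) = {}"
    using TComma.prems(1) by auto
  with TComma.IH Z obtain d1 d2 where d: "Z1 = tsubst s d1" "Z2 = tsubst t d2"
    "\<forall>j. psubst A G (ds j) (d1 j)" "\<forall>j. psubst A G (ds j) (d2 j)" by blast
  obtain d where "tsubst s d = tsubst s d1" "tsubst t d = tsubst t d2" "\<forall>j. psubst A G (ds j) (d j)"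
    by (rule tsubst_merge[OF disj d(3,4)])
  then show ?case by (intro exI[of _ d]) (simp add: Z d)
next
  case (TSemi s t)
  from TSemi.prems(2) obtain Z1 Z2 where Z: "Z = Semi Z1 Z2"
    "psubst A G (tsubst s ds) Z1" "psubst A G (tsubst t ds) Z2" by (auto elim: psubst_SemiE)
  have "distinct (tvars s)" "distinct (tvars t)" and disj: "set (tvars s) \<inter> set (tvars t) = {}"
    using TSemi.prems(1) by auto
  with TSemi.IH Z obtain d1 d2 where d: "Z1 = tsubst s d1" "Z2 = tsubst t d2"
    "\<forall>j. psubst A G (ds j) (d1 j)" "\<forall>j. psubst A G (ds j) (d2 j)" by blast
  obtain d where "tsubst s d = tsubst s d1" "tsubst t d = tsubst t d2" "\<forall>j. psubst A G (ds j) (d j)"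
    by (rule tsubst_merge[OF disj d(3,4)])
  then show ?case by (intro exI[of _ d]) (simp add: Z d)
qed

lemma psubst_linear_instance:
  assumes "linear T" and "psubst A G (fill P (tsubst T ds)) Y"
  obtains P' ds' where "Y = fill P' (tsubst T ds')"
    and "\<forall>T'. psubst A G (fill P (tsubst T' ds)) (fill P' (tsubst T' ds'))"
proof -
  obtain P' V where Y: "Y = fill P' V" "psubst A G (tsubst T ds) V"
    and P': "\<forall>U U'. psubst A G U U' \<longrightarrow> psubst A G (fill P U) (fill P' U')"
    using psubst_fill_inv[OF assms(2)] by blast
  obtain ds' where "V = tsubst T ds'" "\<forall>j. psubst A G (ds j) (ds' j)"
    using psubst_tsubst_inv[OF assms(1) Y(2)] by blast
  with that Y(1) P' show ?thesis by (blast intro: psubst_tsubst)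
qed

fun ctx_comp :: "'a ctx \<Rightarrow> 'a ctx \<Rightarrow> 'a ctx" where
  "ctx_comp Hole E = E"
| "ctx_comp (CommaL C b) E = CommaL (ctx_comp C E) b"
| "ctx_comp (CommaR b C) E = CommaR b (ctx_comp C E)"
| "ctx_comp (SemiL C b) E = SemiL (ctx_comp C E) b"
| "ctx_comp (SemiR b C) E = SemiR b (ctx_comp C E)"

lemma fill_ctx_comp [simp]: "fill (ctx_comp D E) U = fill D (fill E U)"
  by (induction D) auto

lemma bequiv_fill: "bequiv U U' \<Longrightarrow> bequiv (fill D U) (fill D U')"
  by (induction D) (auto intro: bequiv.intros)

fun left_rule_premises :: "srule set \<Rightarrow> 'a fm \<Rightarrow> 'a ctx \<Rightarrow> 'a fm \<Rightarrow> bool" where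
  "left_rule_premises L (Atom a) K W = False"
| "left_rule_premises L Top K W = cf L (fill K EmpA) W"
| "left_rule_premises L Bot K W = True"
| "left_rule_premises L (Conj A B) K W = cf L (fill K (Semi (Leaf A) (Leaf B))) W"
| "left_rule_premises L (Disj A B) K W = (cf L (fill K (Leaf A)) W \<and> cf L (fill K (Leaf B)) W)"
| "left_rule_premises L (Imp A B) K W =
    (\<exists>K' H. K = ctx_comp K' (SemiR H Hole) \<and> cf L H A \<and> cf L (fill K' (Leaf B)) W)"
| "left_rule_premises L Emp K W = cf L (fill K EmpM) W"
| "left_rule_premises L (Star A B) K W = cf L (fill K (Comma (Leaf A) (Leaf B))) W"
| "left_rule_premises L (Wand A B) K W =
    (\<exists>K' H. K = ctx_comp K' (CommaR H Hole) \<and> cf L H A \<and> cf L (fill K' (Leaf B)) W)"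

lemma cf_left_rule: "left_rule_premises L F K W \<Longrightarrow> cf L (fill K (Leaf F)) W"
  by (cases F) (auto intro: cf.intros)

definition multicut :: "srule set \<Rightarrow> 'a fm \<Rightarrow> bool" where
  "multicut L A \<longleftrightarrow> (\<forall>G W X Y. cf L G A \<longrightarrow> cf L X W \<longrightarrow> psubst A G X Y \<longrightarrow> cf L Y W)"

lemma multicutD: "multicut L A \<Longrightarrow> cf L G A \<Longrightarrow> cf L X W \<Longrightarrow> psubst A G X Y \<Longrightarrow> cf L Y W"
  unfolding multicut_def by blast

lemma cut_against_left_rule:
  fixes A :: "'a fm"
  assumes "cf L G A" and "\<And>A' :: 'a fm. size A' < size A \<Longrightarrow> multicut L A'"
    and "left_rule_premises L A K W"
  shows "cf L (fill K G) W"
  using assms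
proof (induction arbitrary: K W rule: cf.induct)
  case (conjR G1 A1 G2 B1)
  have "multicut L A1" "multicut L B1" using conjR.prems(1)[of A1] conjR.prems(1)[of B1] by simp_all
  moreover have "cf L (fill K (Semi (Leaf A1) (Leaf B1))) W" using conjR.prems(2) by simp
  ultimately show ?case using conjR.hyps
    by (meson multicutD psubst_fill psubst_Semi psubst_leaf psubst_refl)
next
  case (starR G1 A1 G2 B1)
  have "multicut L A1" "multicut L B1" using starR.prems(1)[of A1] starR.prems(1)[of B1] by simp_all
  moreover have "cf L (fill K (Comma (Leaf A1) (Leaf B1))) W" using starR.prems(2) by simp
  ultimately show ?case using starR.hyps
    by (meson multicutD psubst_fill psubst_Comma psubst_leaf psubst_refl)
next
  case (disjR1 G0 A1 B1)
  have "multicut L A1" using disjR1.prems(1)[of A1] by simp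
  moreover have "cf L (fill K (Leaf A1)) W" using disjR1.prems(2) by simp
  ultimately show ?case using disjR1.hyps by (meson multicutD psubst_fill psubst_leaf)
next
  case (disjR2 G0 B1 A1)
  have "multicut L B1" using disjR2.prems(1)[of B1] by simp
  moreover have "cf L (fill K (Leaf B1)) W" using disjR2.prems(2) by simp
  ultimately show ?case using disjR2.hyps by (meson multicutD psubst_fill psubst_leaf)
next
  case (impR G0 A1 B1)
  have "multicut L A1" "multicut L B1" using impR.prems(1)[of A1] impR.prems(1)[of B1] by simp_all
  obtain K' H where K: "K = ctx_comp K' (SemiR H Hole)" "cf L H A1" "cf L (fill K' (Leaf B1)) W"
    using impR.prems(2) by auto
  have "cf L (Semi G0 H) B1"
    using multicutD[OF \<open>multicut L A1\<close> K(2) impR.hyps] by (meson psubst_Semi psubst_leaf psubst_refl)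
  then have "cf L (fill K' (Semi G0 H)) W"
    using multicutD[OF \<open>multicut L B1\<close> _ K(3)] by (meson psubst_fill psubst_leaf)
  then show ?case
    unfolding K(1) fill_ctx_comp by (rule cf.equiv[rotated]) (simp add: bequiv_fill semi_comm)
next
  case (wandR G0 A1 B1)
  have "multicut L A1" "multicut L B1" using wandR.prems(1)[of A1] wandR.prems(1)[of B1] by simp_all
  obtain K' H where K: "K = ctx_comp K' (CommaR H Hole)" "cf L H A1" "cf L (fill K' (Leaf B1)) W"
    using wandR.prems(2) by auto
  have "cf L (Comma G0 H) B1"
    using multicutD[OF \<open>multicut L A1\<close> K(2) wandR.hyps] by (meson psubst_Comma psubst_leaf psubst_refl)
  then have "cf L (fill K' (Comma G0 H)) W"
    using multicutD[OF \<open>multicut L B1\<close> _ K(3)] by (meson psubst_fill psubst_leaf)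
  then show ?case
    unfolding K(1) fill_ctx_comp by (rule cf.equiv[rotated]) (simp add: bequiv_fill comma_comm)
next
  case equiv
  then show ?case by (meson cf.equiv bequiv_fill)
  \<comment> \<open>The remaining rules act inside the context D; they commute with the cut,
    applied in the composed context \<open>ctx_comp K D\<close>.\<close>
qed (auto simp flip: fill_ctx_comp intro: cf.intros)

lemma psubst_left_rule:
  assumes principal: "\<And>K W. left_rule_premises L A K W \<Longrightarrow> cf L (fill K G) W"
    and "left_rule_premises L F K W" and "psubst A G (Leaf F) V"
  shows "cf L (fill K V) W"
  using psubst_LeafD[OF assms(3)] assms(2) cf_left_rule principal by auto

lemma psubst_fill_left_rule:
  assumes principal: "\<And>K W. left_rule_premises L A K W \<Longrightarrow> cf L (fill K G) W"
    and Y: "psubst A G (fill E (Leaf F)) Y"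
    and prem: "\<And>E'. (\<And>U U'. psubst A G U U' \<Longrightarrow> psubst A G (fill E U) (fill E' U')) \<Longrightarrow>
      left_rule_premises L F E' W"
  shows "cf L Y W"
proof -
  obtain E' V where "Y = fill E' V" "psubst A G (Leaf F) V"
    and "\<forall>U U'. psubst A G U U' \<longrightarrow> psubst A G (fill E U) (fill E' U')"
    using psubst_fill_inv[OF Y] by blast
  with prem show ?thesis by (metis psubst_left_rule[OF principal])
qed

lemma multicut_from_principal_cuts:
  fixes A :: "'a fm"
  assumes lin: "\<forall>r\<in>L. linear (snd r)" and "cf L G A"
    and principal: "\<And>K W. left_rule_premises L A K W \<Longrightarrow> cf L (fill K G) W"
  shows "cf L X W \<Longrightarrow> psubst A G X Y \<Longrightarrow> cf L Y W"
proof (induction arbitrary: Y rule: cf.induct)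
  case (ax a)
  with \<open>cf L G A\<close> show ?case by (metis psubst_LeafD cf.ax)
next
  case (equiv X0 X1 C0)
  then obtain Y0 where "psubst A G X0 Y0" "bequiv Y0 Y"
    using psubst_bequiv[OF equiv.hyps(1)] by blast
  with equiv.IH show ?case by (blast intro: cf.equiv)
next
  case (weak E Z C0 Z')
  then obtain E' V where Y: "Y = fill E' V" "psubst A G (Semi Z Z') V"
    and E': "\<forall>U U'. psubst A G U U' \<longrightarrow> psubst A G (fill E U) (fill E' U')"
    by (blast dest: psubst_fill_inv)
  from Y(2) obtain V1 V2 where "V = Semi V1 V2" "psubst A G Z V1" by (auto elim: psubst_SemiE)
  with weak.IH E' show ?case unfolding Y(1) by (blast intro: cf.weak)
next
  case (contr E Z C0)
  then obtain E' V where Y: "Y = fill E' V" "psubst A G Z V"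
    and E': "\<forall>U U'. psubst A G U U' \<longrightarrow> psubst A G (fill E U) (fill E' U')"
    by (blast dest: psubst_fill_inv)
  with contr.IH show ?case by (blast intro: cf.contr psubst_Semi)
next
  case topR
  then show ?case by (auto dest: psubst_EmpAD intro: cf.topR)
next
  case empR
  then show ?case by (auto dest: psubst_EmpMD intro: cf.empR)
next
  case (topL E C0)
  show ?case by (rule psubst_fill_left_rule[OF principal topL.prems]) (auto intro: topL.IH psubst_refl)
next
  case (empL E C0)
  show ?case by (rule psubst_fill_left_rule[OF principal empL.prems]) (auto intro: empL.IH psubst_refl)
next
  case (botL E C0)
  show ?case by (rule psubst_fill_left_rule[OF principal botL.prems]) auto
next
  case (conjL E A1 B1 C0)
  show ?case by (rule psubst_fill_left_rule[OF principal conjL.prems]) (auto intro: conjL.IH psubst_refl)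
next
  case (disjL E A1 C0 B1)
  show ?case by (rule psubst_fill_left_rule[OF principal disjL.prems]) (auto intro: disjL.IH psubst_refl)
next
  case (starL E A1 B1 C0)
  show ?case by (rule psubst_fill_left_rule[OF principal starL.prems]) (auto intro: starL.IH psubst_refl)
next
  case (conjR G1 A1 G2 B1)
  then show ?case by (auto elim!: psubst_SemiE intro: cf.conjR)
next
  case (starR G1 A1 G2 B1)
  then show ?case by (auto elim!: psubst_CommaE intro: cf.starR)
next
  case (disjR1 X0 A1 B1)
  then show ?case by (blast intro: cf.disjR1)
next
  case (disjR2 X0 B1 A1)
  then show ?case by (blast intro: cf.disjR2)
next
  case (impR X0 A1 B1)
  then show ?case by (blast intro: cf.impR psubst_Semi psubst_refl)
next
  case (wandR X0 A1 B1)
  then show ?case by (blast intro: cf.wandR psubst_Comma psubst_refl)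
next
  case (impL G0 A1 E B1 C0)
  obtain E' V where Y: "Y = fill E' V" "psubst A G (Semi G0 (Leaf (Imp A1 B1))) V"
    and E': "\<forall>U U'. psubst A G U U' \<longrightarrow> psubst A G (fill E U) (fill E' U')"
    using psubst_fill_inv[OF impL.prems] by blast
  from Y(2) obtain V1 V2 where V: "V = Semi V1 V2" "psubst A G G0 V1" "psubst A G (Leaf (Imp A1 B1)) V2"
    by (auto elim: psubst_SemiE)
  have "left_rule_premises L (Imp A1 B1) (ctx_comp E' (SemiR V1 Hole)) C0"
    unfolding left_rule_premises.simps using impL.IH V(2) E' psubst_refl by blast
  from psubst_left_rule[OF principal this V(3)] show ?case by (simp add: Y V)
next
  case (wandL G0 A1 E B1 C0)
  obtain E' V where Y: "Y = fill E' V" "psubst A G (Comma G0 (Leaf (Wand A1 B1))) V"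
    and E': "\<forall>U U'. psubst A G U U' \<longrightarrow> psubst A G (fill E U) (fill E' U')"
    using psubst_fill_inv[OF wandL.prems] by blast
  from Y(2) obtain V1 V2 where V: "V = Comma V1 V2" "psubst A G G0 V1" "psubst A G (Leaf (Wand A1 B1)) V2"
    by (auto elim: psubst_CommaE)
  have "left_rule_premises L (Wand A1 B1) (ctx_comp E' (CommaR V1 Hole)) C0"
    unfolding left_rule_premises.simps using wandL.IH V(2) E' psubst_refl by blast
  from psubst_left_rule[OF principal this V(3)] show ?case by (simp add: Y V)
next
  case (struct Ts T P ds C0)
  have "linear T" using lin struct.hyps(1) by auto
  then obtain P' ds' where Y: "Y = fill P' (tsubst T ds')"
    and "\<forall>T'. psubst A G (fill P (tsubst T' ds)) (fill P' (tsubst T' ds'))"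
    using struct.prems by (rule psubst_linear_instance)
  with struct.IH have "\<forall>T'\<in>Ts. cf L (fill P' (tsubst T' ds')) C0" by blast
  with struct.hyps(1) show ?case unfolding Y by (rule cf.struct)
qed

lemma multicut_admissible:
  assumes "\<forall>r\<in>L. linear (snd r)"
  shows "multicut L A"
proof (induction A rule: measure_induct_rule[of size])
  case (less A)
  then show ?case
    unfolding multicut_def
    using multicut_from_principal_cuts[OF assms] cut_against_left_rule[OF _ less.IH] by blast
qed

theorem theorem7p5:
  fixes L :: "srule set" and D :: "'a ctx" and G :: "'a bunch" and A B :: "'a fm"
  assumes "finite L"
    and "\<forall>r\<in>L. simple_rule r"
    and "cf L G A"
    and "cf L (fill D (Leaf A)) B"
  shows "cf L (fill D G) B"
proof -
  have "\<forall>r\<in>L. linear (snd r)" using assms(2) by (simp add: simple_rule_def)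
  then have "multicut L A" by (rule multicut_admissible)
  then show ?thesis using assms(3,4) by (blast intro: multicutD psubst_fill psubst_leaf)
qed

end
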